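(* There is an absolute constant $K>0$ such that the following holds. Let $n,k,m$ be integers and $\delta$ a real number with $1\le m\le k\le n$ and $0<\delta<1$. Let \[ p=\min\Bigl\{\frac{1}{m}\cdot\log_2\frac{m}{\delta}\cdot\ln\frac{Kn}{m},\ \frac12\Bigr\}, \] and let $M$ be a random $m\times n$ matrix over $GF(2)$ whose entries are independent and each equals $1$ with probability $p$. Then for every random variable $X$ on $\{0,1\}^n$ of min-entropy at least $k$, independent of $M$, the statistical distance between $(M, MX)$ and $(M,U_m)$ is at most \[ \tfrac12\sqrt{\delta+K\cdot 2^{-k+m}}, \] where $U_m$ is uniform on $\{0,1\}^m$ and independent of $M$. (That is, $H(x)=Mx$ is a strong extractor family for min-entropy $k$ with this error.)
   Context: The min-entropy of a random variable $X$ is $\min_x \log_2(1/\Pr[X=x])$. The statistical distance between random variables $A,B$ on a finite set $\Omega$ is $\max_{T\subseteq\Omega}|\Pr[A\in T]-\Pr[B\in T]| = \frac12\sum_{\omega}|\Pr[A=\omega]-\Pr[B=\omega]|$. A strong extractor family for min-entropy $k$ with error $\varepsilon$ is a distribution $H$ on functions $\{0,1\}^n\to\{0,1\}^m$ such that for every $X$ of min-entropy at least $k$ (independent of $H$), $(H,H(X))$ and $(H,U_m)$ are within statistical distance $\varepsilon$. *)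

theory Defs
  imports "HOL-Probability.Probability"
begin

text \<open>Bit vectors in {0,1}^n are represented as functions nat => bool that are False
  outside {..<n}; an m x n matrix over GF(2) as a function nat * nat => bool that is
  False outside {..<m} x {..<n}. True = 1, False = 0.\<close>

definition bitvecs :: "nat \<Rightarrow> (nat \<Rightarrow> bool) set" where
  "bitvecs n = {x. \<forall>i. n \<le> i \<longrightarrow> \<not> x i}"

definition gf2_mult :: "nat \<Rightarrow> nat \<Rightarrow> (nat \<times> nat \<Rightarrow> bool) \<Rightarrow> (nat \<Rightarrow> bool) \<Rightarrow> (nat \<Rightarrow> bool)" where
  "gf2_mult m n A x = (\<lambda>i. i < m \<and> odd (card {j \<in> {..<n}. A (i, j) \<and> x j}))"

definition rand_matrix :: "nat \<Rightarrow> nat \<Rightarrow> real \<Rightarrow> (nat \<times> nat \<Rightarrow> bool) pmf" where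
  "rand_matrix m n p = Pi_pmf ({..<m} \<times> {..<n}) False (\<lambda>_. bernoulli_pmf p)"

definition uniform_bits :: "nat \<Rightarrow> (nat \<Rightarrow> bool) pmf" where
  "uniform_bits m = pmf_of_set (bitvecs m)"

definition min_entropy :: "'a pmf \<Rightarrow> real" where
  "min_entropy X = (INF x\<in>set_pmf X. log 2 (1 / pmf X x))"

definition stat_dist :: "'a pmf \<Rightarrow> 'a pmf \<Rightarrow> real" where
  "stat_dist A B = (SUP T. \<bar>measure_pmf.prob A T - measure_pmf.prob B T\<bar>)"

end

theory Submission
  imports Defs "HOL-Analysis.Harmonic_Numbers"
begin

(* Write P for the distribution of X, q = 1 - 2p, and d(x,x') for the Hamming distance.
   (1) Statistical distance is bounded by half the square root of the chi-square distance:
       SD(A,B) \<le> 1/2 sqrt (\<Sum> a\<^sup>2/b - 1).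
   (2) For A = (M, M X) and B = (M, U_m) the chi-square sum equals 2^m times the collision
       probability Pr[M X = M X'], and for the Bernoulli matrix
       Pr_M[M x = M x'] = ((1 + q^d(x,x'))/2)^m, since every row has an even number of ones
       on the coordinates where x and x' differ.
   (3) Splitting the pairs (x,x') by Hamming distance (d = 0, 1 \<le> d < t, d \<ge> t) and using
       P(x) \<le> 2^-k bounds the sum by 1 + \<delta> + 2 \<cdot> 2^(m-k), provided the threshold t satisfies
       (1 + q^t)^m \<le> 1 + \<delta> and \<Sum>_{1\<le>d<t} C(n,d) ((1 + q^d)/2)^m \<le> 1.
   (4) A purely analytic argument shows such a t exists for the p of the theorem with
       K = exp 128: each term of the sum is at most 2^-d. *)

lemma one_plus_half_sq_le_exp: "(x::real) \<ge> 0 \<Longrightarrow> (1 + x/2)^2 \<le> exp x"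
  using exp_ge_one_plus_x_over_n_power_n[where x=x and n=2] by simp

lemma exp_neg_le_inverse_sq: "(y::real) \<ge> 0 \<Longrightarrow> exp (-y) \<le> 1 / (1 + y/2)^2"
  using one_plus_half_sq_le_exp[of y] by (simp add: exp_minus field_simps)

lemma ln_le_two_sqrt: "(x::real) > 0 \<Longrightarrow> ln x \<le> 2 * sqrt x"
proof -
  assume x: "x > 0"
  have "ln x = 2 * ln (sqrt x)" using x by (simp add: ln_sqrt)
  also have "\<dots> \<le> 2 * (sqrt x - 1)" using ln_le_minus_one[of "sqrt x"] x by simp
  finally show ?thesis by simp
qed

text \<open>A single term of the exponential series is bounded by the whole series.\<close>
lemma power_div_fact_le_exp: "(x::real) \<ge> 0 \<Longrightarrow> x ^ d / fact d \<le> exp x"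
proof -
  assume x: "x \<ge> 0"
  have "x ^ d / fact d \<le> (\<Sum>n\<le>d. x ^ n / fact n)"
    using x by (intro member_le_sum) auto
  also have "\<dots> \<le> exp x"
    using x summable_exp_generic[of x]
    by (auto simp: exp_def divide_inverse ac_simps intro!: sum_le_suminf)
  finally show ?thesis .
qed

text \<open>The binomial estimate \<open>C(n,d) \<le> (e n / d)^d\<close>, written in exponential form.\<close>
lemma binomial_le_exp:
  assumes "d \<ge> 1"
  shows "real (n choose d) \<le> exp (real d * (1 + ln (real n) - ln (real d)))"
proof (cases "n = 0")
  case True then show ?thesis using assms by (simp add: binomial_eq_0)
next
  case False
  have f: "fact d > (0::real)" by simp
  have c: "real (n choose d) * fact d \<le> real n ^ d"
    using binomial_fact_pow[of n d] by (metis of_nat_fact of_nat_le_iff of_nat_mult of_nat_power)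
  have dd: "real d ^ d \<le> exp (real d) * fact d"
    using power_div_fact_le_exp[of "real d" d] f by (simp add: divide_le_eq)
  have "real (n choose d) \<le> real n ^ d / fact d" using c f by (simp add: le_divide_eq)
  also have "\<dots> \<le> real n ^ d * exp (real d) / real d ^ d"
  proof -
    have "real n ^ d / fact d = real n ^ d * (1 / fact d)" by simp
    also have "1 / fact d \<le> exp (real d) / real d ^ d"
      using dd f assms by (simp add: divide_simps mult.commute)
    finally show ?thesis using assms by (simp add: mult_left_mono divide_simps)
  qed
  also have "\<dots> = exp (real d * (1 + ln (real n) - ln (real d)))"
  proof -
    have a: "exp (real d * ln (real n)) = real n ^ d"
      using False by (subst exp_of_nat_mult) simp
    have b: "exp (real d * ln (real d)) = real d ^ d"
      using assms by (subst exp_of_nat_mult) simp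
    show ?thesis
      by (simp add: exp_diff exp_add distrib_left a b algebra_simps)
  qed
  finally show ?thesis .
qed

text \<open>Powers of \<open>q = 1 - 2p \<le> e\<^sup>-\<^sup>2\<^sup>p\<close> decay exponentially in the exponent.\<close>
lemma power_le_exp_neg:
  fixes q a :: real
  assumes "0 \<le> q" "q \<le> exp (- a)"
  shows "q ^ d \<le> exp (- (a * d))"
proof -
  have "q ^ d \<le> exp (- a) ^ d" using assms by (intro power_mono) auto
  also have "\<dots> = exp (- (a * d))" by (simp add: exp_of_nat_mult[symmetric] algebra_simps)
  finally show ?thesis .
qed

lemma sum_half_powers_le_one: "(\<Sum>d\<in>{1..<t}. (1/2::real)^d) \<le> 1"
proof -
  have "(\<Sum>d\<in>{1..<Suc s}. (1/2::real)^d) = 1 - (1/2)^s" for s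
    by (induction s) (auto simp: sum.op_ivl_Suc)
  then show ?thesis by (cases t) auto
qed

text \<open>\<open>log\<^sub>2 (1/\<delta>) \<ge> 1 - \<delta>\<close>; this settles the case of a single output bit.\<close>
lemma log2_inverse_ge:
  fixes \<delta> :: real assumes "0 < \<delta>" "\<delta> < 1"
  shows "log 2 (1 / \<delta>) \<ge> 1 - \<delta>"
proof -
  have l2: "0 < ln (2::real)" "ln (2::real) < 1" using ln_2_less_1 by auto
  have neg: "- ln \<delta> \<ge> 0" using assms by simp
  have "- ln \<delta> * ln 2 \<le> - ln \<delta> * 1" using neg l2 by (intro mult_left_mono) auto
  then have "ln \<delta> / ln 2 \<le> ln \<delta>" by (simp add: pos_divide_le_eq[OF l2(1)])
  moreover have "- ln \<delta> \<ge> 1 - \<delta>" using ln_le_minus_one[OF assms(1)] by simp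
  ultimately show ?thesis using assms by (simp add: log_def ln_div)
qed

section \<open>Choice of the Hamming-distance threshold\<close>

text \<open>Notation in this section: \<open>L = log\<^sub>2 (m/\<delta>)\<close>, \<open>\<lambda> = ln (e\<^sup>1\<^sup>2\<^sup>8 n / m)\<close>, so that the entry
  probability is \<open>p = L \<lambda> / m\<close> and \<open>y = 2 p d\<close> is the exponent governing \<open>q\<^sup>d \<le> e\<^sup>-\<^sup>y\<close>.
  The goal is \<open>C(n,d) ((1 + q\<^sup>d)/2)\<^sup>m \<le> 2\<^sup>-\<^sup>d\<close>; in logarithmic form this is the inequality
  \<open>d (1 + ln n - ln d) + d ln 2 \<le> m (1 - e\<^sup>-\<^sup>y) / 2\<close>, proved separately for small and large \<open>y\<close>.\<close>

text \<open>The entropy term \<open>d ln (m/d)\<close> is negligible against \<open>m\<close> once the constant 128 is subtracted.\<close>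
lemma entropy_excess_small:
  fixes d m :: real
  assumes d1: "d \<ge> 1" and m0: "m > 0"
  shows "d * (1 + ln 2 - 128 + ln m - ln d) \<le> m / 500"
proof (cases "ln m - ln d \<le> 126")
  case True
  have "1 + ln 2 - 128 + ln m - ln d \<le> 0" using True ln2_le_25_over_36 by simp
  then show ?thesis using d1 m0 by (simp add: mult_nonneg_nonpos order_trans[of _ 0])
next
  case False
  define r where "r = m / d"
  have r0: "r > 0" using m0 d1 unfolding r_def by simp
  have lnr: "ln r = ln m - ln d" unfolding r_def using m0 d1 by (simp add: ln_div)
  have "exp 126 < exp (ln r)" using False lnr by simp
  then have "r > exp 126" using r0 by simp
  have "exp (126::real) = (exp 63)^2" by (simp add: power2_eq_square flip: exp_add)
  then have "sqrt r \<ge> exp 63"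
    using \<open>r > exp 126\<close> real_sqrt_le_mono[of "exp 126" r] by simp
  moreover have "exp (63::real) \<ge> (1 + 63/2)^2" using one_plus_half_sq_le_exp[of 63] by simp
  ultimately have sr: "sqrt r \<ge> 1000" by (simp add: power2_eq_square)
  have "d * ln r \<le> d * (2 * sqrt r)" using ln_le_two_sqrt[OF r0] d1 by (intro mult_left_mono) auto
  also have "d * (2 * sqrt r) = 2 * m / sqrt r"
  proof -
    have "sqrt r * sqrt r = r" using r0 by simp
    moreover have "m = d * r" using d1 unfolding r_def by simp
    ultimately have "m = d * sqrt r * sqrt r" by (simp add: mult.assoc)
    then show ?thesis using r0 by (simp add: field_simps)
  qed
  also have "\<dots> \<le> 2 * m / 1000" using sr m0 r0 by (intro divide_left_mono) auto
  finally have "d * ln r \<le> m / 500" by simp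
  moreover have "d * (1 + ln 2 - 128) \<le> 0"
    using ln2_le_25_over_36 d1 by (simp add: mult_nonneg_nonpos)
  ultimately show ?thesis using lnr by (simp add: algebra_simps)
qed

lemma large_exponent_slack:
  fixes y L :: real
  assumes y1: "1 < y" and yL: "y < (1 + L) * ln 2" and L8: "L \<ge> 8"
  shows "y / L + 1/50 + exp (-y) \<le> 1"
proof (cases "y \<le> 3")
  case True
  have "exp (-y) \<le> 1 / (1 + y/2)^2" using exp_neg_le_inverse_sq y1 by simp
  also have "\<dots> \<le> 1 / (1 + 1/2)^2" using y1 by (intro divide_left_mono power_mono) auto
  finally have "exp (-y) \<le> 4/9" by (simp add: power2_eq_square)
  moreover have "y / L \<le> 3 / L" using True L8 by (intro divide_right_mono) auto
  moreover have "3 / L \<le> 3 / 8" using L8 by (intro divide_left_mono) auto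
  ultimately show ?thesis by simp
next
  case False
  have "exp (-y) \<le> 1 / (1 + y/2)^2" using exp_neg_le_inverse_sq y1 by simp
  also have "\<dots> \<le> 1 / (1 + 3/2)^2" using False by (intro divide_left_mono power_mono) auto
  finally have "exp (-y) \<le> 4/25" by (simp add: power2_eq_square)
  moreover have "y / L \<le> 25/36 * (1 + 1/8)"
  proof -
    have "y / L \<le> (1 + L) * ln 2 / L" using yL L8 by (intro divide_right_mono) auto
    also have "\<dots> = ln 2 * (1 + 1/L)" using L8 by (simp add: field_simps)
    also have "\<dots> \<le> 25/36 * (1 + 1/8)" using ln2_le_25_over_36 L8
      by (intro mult_mono) (auto simp: divide_simps)
    finally show ?thesis .
  qed
  ultimately show ?thesis by simp
qed

text \<open>The logarithmic form of \<open>C(n,d) ((1 + q\<^sup>d)/2)\<^sup>m \<le> 2\<^sup>-\<^sup>d\<close>.\<close>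
lemma exponent_balance:
  fixes d m n L lam y :: real
  assumes d1: "d \<ge> 1" and m0: "m > 0" and L8: "L \<ge> 8" and lam: "lam \<ge> 128"
    and lnm: "ln m \<le> L" and lnn: "ln n = ln m + lam - 128"
    and y: "y = 2 * L * lam * d / m" and yL: "y < (1 + L) * ln 2"
  shows "d * (1 + ln n - ln d) + d * ln 2 \<le> m * (1 - exp (-y)) / 2"
proof (cases "y \<le> 1")
  case True
  have ypos: "y > 0" using y d1 m0 L8 lam by simp
  text \<open>For small \<open>y\<close>, \<open>1 - e\<^sup>-\<^sup>y \<ge> y/2\<close>, and \<open>m y / 4 = d L \<lambda> / 2\<close> dominates.\<close>
  have "exp (-y) \<le> 1 / (1 + y)"
    using exp_ge_add_one_self[of y] ypos by (simp add: exp_minus field_simps)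
  also have "1 / (1 + y) \<le> 1 - y/2"
  proof -
    have "y * y \<le> y * 1" using True ypos by (intro mult_left_mono) auto
    then show ?thesis using ypos by (simp add: field_simps power2_eq_square)
  qed
  finally have gain: "m * (y/2) / 2 \<le> m * (1 - exp (-y)) / 2"
    using m0 by (intro divide_right_mono mult_left_mono) auto
  have gain_eq: "m * (y/2) / 2 = d * (L * lam / 2)" using y m0 by (simp add: field_simps)
  have "2 + L + lam \<le> L * lam / 2"
  proof -
    have "(L/2 - 1) * (lam - 2) \<ge> 3 * 126" using L8 lam by (intro mult_mono) auto
    then show ?thesis by (simp add: algebra_simps)
  qed
  moreover have "1 + ln n - ln d + ln 2 \<le> 2 + L + lam"
    using lnn lnm ln2_le_25_over_36 ln_ge_zero[OF d1] by simp
  ultimately have "d * (1 + ln n - ln d + ln 2) \<le> d * (L * lam / 2)"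
    using d1 by (intro mult_left_mono) auto
  then show ?thesis using gain gain_eq by (simp add: algebra_simps)
next
  case False
  text \<open>For large \<open>y\<close>, \<open>d \<lambda> = m y/(2L)\<close> and the remaining entropy term is at most \<open>m/500\<close>.\<close>
  have lhs: "d * (1 + ln n - ln d) + d * ln 2 = m * (y / L) / 2 + d * (1 + ln 2 - 128 + ln m - ln d)"
    unfolding lnn using y L8 m0 by (simp add: field_simps)
  have "y / L + 1/250 \<le> 1 - exp (-y)"
    using large_exponent_slack[of y L] False yL L8 by simp
  then have "m * (y / L + 1/250) \<le> m * (1 - exp (-y))" using m0 by (intro mult_left_mono) auto
  then show ?thesis
    using lhs entropy_excess_small[OF d1 m0] by (simp add: algebra_simps)
qed

lemma middle_term_le:
  fixes n m d :: nat and L lam p q :: real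
  assumes d1: "d \<ge> 1" and m0: "m > 0" and L8: "L \<ge> 8" and lam: "lam \<ge> 128"
    and lnm: "ln (real m) \<le> L" and lnn: "ln (real n) = ln (real m) + lam - 128"
    and p: "p = L * lam / real m" and q: "0 \<le> q" "q \<le> exp (- 2 * p)"
    and d_small: "2 * p * d < (1 + L) * ln 2"
  shows "real (n choose d) * ((1 + q^d) / 2)^m \<le> (1/2)^d"
proof -
  define y where "y = 2 * L * lam * real d / real m"
  have ye: "y = 2 * p * d" unfolding y_def p by simp
  have bal: "real d * (1 + ln (real n) - ln (real d)) + real d * ln 2 \<le> real m * (1 - exp (-y)) / 2"
    by (rule exponent_balance) (use assms in \<open>auto simp: y_def ye\<close>)
  have "(1 + q^d) / 2 \<le> 1 + (- (1 - exp (-y)) / 2)"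
    using power_le_exp_neg[of q "2 * p" d] q ye by (simp add: field_simps)
  also have "\<dots> \<le> exp (- (1 - exp (-y)) / 2)" by (rule exp_ge_add_one_self)
  finally have "((1 + q^d) / 2)^m \<le> exp (- (1 - exp (-y)) / 2) ^ m"
    using q by (intro power_mono) auto
  also have "\<dots> = exp (- real m * (1 - exp (-y)) / 2)"
    by (simp add: exp_of_nat_mult[symmetric] algebra_simps)
  finally have "real (n choose d) * ((1 + q^d) / 2)^m \<le>
        exp (real d * (1 + ln (real n) - ln (real d))) * exp (- real m * (1 - exp (-y)) / 2)"
    using binomial_le_exp[OF d1] q by (intro mult_mono) auto
  also have "\<dots> \<le> exp (- (real d * ln 2))"
    unfolding exp_add[symmetric] using bal by simp
  also have "\<dots> = (1/2)^d"
  proof -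
    have "exp (real d * ln 2) = 2 ^ d" by (subst exp_of_nat_mult) simp
    then show ?thesis by (simp add: exp_minus inverse_eq_divide power_one_over)
  qed
  finally show ?thesis .
qed

lemma tail_factor_le:
  fixes q p \<delta> :: real and m t :: nat
  assumes p: "p > 0" and q: "0 \<le> q" "q \<le> exp (- 2 * p)" and \<delta>: "0 < \<delta>" "\<delta> < 1"
    and m0: "m > 0" and t: "ln (2 * real m / \<delta>) / (2 * p) \<le> real t"
  shows "(1 + q^t)^m \<le> 1 + \<delta>"
proof -
  have "q^t \<le> exp (- (2 * p * t))" using power_le_exp_neg[of q "2 * p" t] q by simp
  also have "\<dots> \<le> exp (- ln (2 * real m / \<delta>))"
    using t p by (simp add: divide_le_eq mult.commute)
  also have "\<dots> = \<delta> / (2 * real m)" using m0 \<delta> by (simp add: exp_minus)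
  finally have qt: "q^t \<le> \<delta> / (2 * real m)" .
  have "(1 + q^t)^m \<le> exp (q^t) ^ m" using q by (intro power_mono) auto
  also have "\<dots> = exp (real m * q^t)" by (simp add: exp_of_nat_mult)
  also have "\<dots> \<le> exp (\<delta> / 2)" using qt m0 by (simp add: field_simps)
  also have "\<dots> \<le> 1 + \<delta>" using exp_bound_lemma[of "\<delta> / 2"] \<delta> by simp
  finally show ?thesis .
qed

lemma threshold_exists_sparse:
  fixes n m :: nat and L lam p \<delta> :: real
  assumes m0: "m > 0" and L8: "L \<ge> 8" and lam: "lam \<ge> 128"
    and lnm: "ln (real m) \<le> L" and lnn: "ln (real n) = ln (real m) + lam - 128"
    and p: "p = L * lam / real m" "p < 1/2" and \<delta>: "0 < \<delta>" "\<delta> < 1"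
    and ln2m: "ln (2 * real m / \<delta>) = (1 + L) * ln 2"
  shows "\<exists>t\<ge>1. (1 + (1 - 2*p)^t)^m \<le> 1 + \<delta> \<and>
           (\<Sum>d\<in>{1..<t}. real (n choose d) * ((1 + (1 - 2*p)^d) / 2)^m) \<le> 1"
proof -
  define q where "q = 1 - 2 * p"
  define z where "z = ln (2 * real m / \<delta>) / (2 * p)"
  define t where "t = nat \<lceil>z\<rceil>"
  have ppos: "p > 0" using p L8 lam m0 by simp
  have q: "0 \<le> q" "q \<le> exp (- 2 * p)"
    using p(2) exp_ge_add_one_self[of "-2*p"] unfolding q_def by linarith+
  have zpos: "z > 0" unfolding z_def ln2m using L8 ppos by simp
  have t1: "t \<ge> 1" unfolding t_def using zpos by linarith
  have tail: "(1 + q^t)^m \<le> 1 + \<delta>"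
    by (rule tail_factor_le[OF ppos q \<delta> m0]) (unfold t_def z_def[symmetric], linarith)
  have "real (n choose d) * ((1 + q^d) / 2)^m \<le> (1/2)^d" if d: "d \<in> {1..<t}" for d
  proof (rule middle_term_le[OF _ m0 L8 lam lnm lnn p(1) q])
    have "int d < \<lceil>z\<rceil>" using d unfolding t_def by auto
    then have "real_of_int (int d) < z" by (simp only: less_ceiling_iff)
    then have "real d < z" by simp
    then show "2 * p * d < (1 + L) * ln 2"
      using ppos unfolding z_def ln2m by (simp add: field_simps)
  qed (use d in auto)
  then have "(\<Sum>d\<in>{1..<t}. real (n choose d) * ((1 + q^d) / 2)^m) \<le> (\<Sum>d\<in>{1..<t}. (1/2::real)^d)"
    by (intro sum_mono)
  also have "\<dots> \<le> 1" by (rule sum_half_powers_le_one)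
  finally show ?thesis using tail t1 unfolding q_def by blast
qed

text \<open>In the sparse regime \<open>m > 2 L \<lambda> \<ge> 256 L\<close>, so \<open>L \<ge> log\<^sub>2 m \<ge> 8\<close> and also \<open>L \<ge> ln m\<close>.\<close>
lemma sparse_regime_log_bounds:
  fixes m :: nat and L lam :: real
  assumes Lm: "log 2 (real m) \<le> L" and m2: "m \<ge> 2" and lam: "lam \<ge> 128"
    and sparse: "2 * L * lam < real m"
  shows "L \<ge> 8" "ln (real m) \<le> L"
proof -
  have "log 2 2 \<le> log 2 (real m)" using m2 by simp
  then have L1: "L \<ge> 1" using Lm by simp
  have "256 \<le> 2 * L * lam" using L1 lam mult_mono[of 1 L 128 lam] by simp
  then have "log 2 256 \<le> log 2 (real m)" using sparse by simp
  then show "L \<ge> 8" using Lm by (simp add: log_pow_cancel[of 2 8, simplified])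
  have "ln (real m) \<le> log 2 (real m)"
    using m2 ln_2_less_1 by (simp add: log_def pos_le_divide_eq mult_left_le)
  then show "ln (real m) \<le> L" using Lm by simp
qed

text \<open>If \<open>p = 1/2\<close>, or if \<open>m = 1\<close>, the threshold \<open>t = 1\<close> works.\<close>
lemma threshold_exists:
  fixes n m :: nat and \<delta> :: real
  assumes m1: "1 \<le> m" and mn: "m \<le> n" and \<delta>: "0 < \<delta>" "\<delta> < 1"
  defines "p \<equiv> min ((1 / real m) * log 2 (real m / \<delta>) * ln (exp 128 * real n / real m)) (1/2)"
  shows "\<exists>t\<ge>1. (1 + (1 - 2*p)^t)^m \<le> 1 + \<delta> \<and>
           (\<Sum>d\<in>{1..<t}. real (n choose d) * ((1 + (1 - 2*p)^d) / 2)^m) \<le> 1"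
proof -
  define lam where "lam = ln (exp 128 * real n / real m)"
  define L where "L = log 2 (real m / \<delta>)"
  have mpos: "real m > 0" using m1 by simp
  have lnn: "ln (real n) = ln (real m) + lam - 128"
    unfolding lam_def using mpos mn by (simp add: ln_mult ln_div)
  moreover have "ln (real m) \<le> ln (real n)" using mn mpos by simp
  ultimately have lam: "lam \<ge> 128" by simp
  have Lm: "L \<ge> log 2 (real m)" unfolding L_def using \<delta> mpos by (simp add: le_divide_eq)
  have p_eq: "p = min (L * lam / real m) (1/2)" unfolding p_def L_def lam_def by simp
  have threshold_one: ?thesis if "(1 + (1 - 2*p))^m \<le> 1 + \<delta>"
    using that by (intro exI[of _ 1]) simp
  consider "p = 1/2" | "m = 1" | "p = L * lam / real m" "p < 1/2" "m \<ge> 2"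
    using p_eq m1 by linarith
  then show ?thesis
  proof cases
    case 1
    show ?thesis by (rule threshold_one) (use \<delta> in \<open>simp add: 1\<close>)
  next
    case 2
    have "(1 - \<delta>) * 128 \<le> L * lam"
      using log2_inverse_ge[OF \<delta>] lam \<delta> unfolding L_def 2 by (intro mult_mono) auto
    then have "1 - 2 * p \<le> \<delta>" using 2 \<delta> unfolding p_eq by simp
    then show ?thesis using 2 by (intro threshold_one) simp
  next
    case 3
    have "2 * L * lam = 2 * p * real m" using 3(1) mpos by simp
    also have "\<dots> < real m" using 3(2) mpos by simp
    finally obtain L8: "L \<ge> 8" and lnm: "ln (real m) \<le> L"
      using sparse_regime_log_bounds[OF Lm 3(3) lam] by blast
    have "ln (real m / \<delta>) = L * ln 2" unfolding L_def by (simp add: log_def)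
    then have ln2m: "ln (2 * real m / \<delta>) = (1 + L) * ln 2"
      using mpos \<delta> by (simp add: ln_mult ln_div algebra_simps)
    show ?thesis by (rule threshold_exists_sparse[OF _ L8 lam lnm lnn 3(1,2) \<delta> ln2m]) (use m1 in simp)
  qed
qed

section \<open>Statistical distance and the chi-square distance\<close>

lemma prob_eq_sum_pmf:
  assumes fin: "finite \<Omega>" and sub: "set_pmf A \<subseteq> \<Omega>"
  shows "measure_pmf.prob A T = (\<Sum>\<omega>\<in>T \<inter> \<Omega>. pmf A \<omega>)"
proof -
  have "measure_pmf.prob A T = measure_pmf.prob A (T \<inter> set_pmf A)"
    by (simp add: measure_Int_set_pmf)
  also have "T \<inter> set_pmf A = (T \<inter> \<Omega>) \<inter> set_pmf A" using sub by auto
  also have "measure_pmf.prob A \<dots> = measure_pmf.prob A (T \<inter> \<Omega>)"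
    by (simp add: measure_Int_set_pmf)
  also have "\<dots> = (\<Sum>\<omega>\<in>T \<inter> \<Omega>. pmf A \<omega>)" using fin by (simp add: measure_measure_pmf_finite)
  finally show ?thesis .
qed

lemma prob_eq_sum_of_bool:
  assumes fin: "finite \<Omega>" and sub: "set_pmf A \<subseteq> \<Omega>"
  shows "measure_pmf.prob A {\<omega>. P \<omega>} = (\<Sum>\<omega>\<in>\<Omega>. pmf A \<omega> * of_bool (P \<omega>))"
  using fin by (auto simp: prob_eq_sum_pmf[OF fin sub] Int_commute sum.inter_restrict intro!: sum.cong)

lemma stat_dist_le_half_l1:
  assumes fin: "finite \<Omega>" and subA: "set_pmf A \<subseteq> \<Omega>" and subB: "set_pmf B \<subseteq> \<Omega>"
  shows "stat_dist A B \<le> 1/2 * (\<Sum>\<omega>\<in>\<Omega>. \<bar>pmf A \<omega> - pmf B \<omega>\<bar>)"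
  unfolding stat_dist_def
proof (intro cSUP_least)
  fix T
  define f where "f \<omega> = pmf A \<omega> - pmf B \<omega>" for \<omega>
  have split: "sum h \<Omega> = sum h (T \<inter> \<Omega>) + sum h (\<Omega> - T)" for h :: "_ \<Rightarrow> real"
    using fin by (subst sum.union_disjoint[symmetric]) (auto intro: sum.cong)
  have "(\<Sum>\<omega>\<in>\<Omega>. f \<omega>) = 0"
    using sum_pmf_eq_1[OF fin subA] sum_pmf_eq_1[OF fin subB] by (simp add: f_def sum_subtractf)
  then have "(\<Sum>\<omega>\<in>T \<inter> \<Omega>. f \<omega>) = - (\<Sum>\<omega>\<in>\<Omega> - T. f \<omega>)" using split[of f] by simp
  moreover have "\<bar>\<Sum>\<omega>\<in>T \<inter> \<Omega>. f \<omega>\<bar> \<le> (\<Sum>\<omega>\<in>T \<inter> \<Omega>. \<bar>f \<omega>\<bar>)" by (rule sum_abs)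
  moreover have "\<bar>\<Sum>\<omega>\<in>\<Omega> - T. f \<omega>\<bar> \<le> (\<Sum>\<omega>\<in>\<Omega> - T. \<bar>f \<omega>\<bar>)" by (rule sum_abs)
  moreover have "measure_pmf.prob A T - measure_pmf.prob B T = (\<Sum>\<omega>\<in>T \<inter> \<Omega>. f \<omega>)"
    unfolding prob_eq_sum_pmf[OF fin subA] prob_eq_sum_pmf[OF fin subB] f_def
    by (simp add: sum_subtractf)
  ultimately show "\<bar>measure_pmf.prob A T - measure_pmf.prob B T\<bar> \<le> 1/2 * (\<Sum>\<omega>\<in>\<Omega>. \<bar>f \<omega>\<bar>)"
    using split[of "\<lambda>\<omega>. \<bar>f \<omega>\<bar>"] by linarith
qed simp

text \<open>Cauchy-Schwarz: the \<open>\<ell>\<^sub>1\<close> distance is at most the square root of the chi-square distance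
  \<open>\<Sum> (a - b)\<^sup>2 / b = \<Sum> a\<^sup>2 / b - 1\<close>.\<close>
lemma l1_le_sqrt_chi_square:
  assumes fin: "finite (set_pmf B)" and sub: "set_pmf A \<subseteq> set_pmf B"
  shows "(\<Sum>\<omega>\<in>set_pmf B. \<bar>pmf A \<omega> - pmf B \<omega>\<bar>)
           \<le> sqrt ((\<Sum>\<omega>\<in>set_pmf B. (pmf A \<omega>)^2 / pmf B \<omega>) - 1)"
proof -
  let ?\<Omega> = "set_pmf B"
  define a where "a = pmf A"
  define b where "b = pmf B"
  have bpos: "\<And>\<omega>. \<omega> \<in> ?\<Omega> \<Longrightarrow> b \<omega> > 0" unfolding b_def by (simp add: pmf_positive)
  have sa: "(\<Sum>\<omega>\<in>?\<Omega>. a \<omega>) = 1" unfolding a_def by (rule sum_pmf_eq_1[OF fin sub])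
  have sb: "(\<Sum>\<omega>\<in>?\<Omega>. b \<omega>) = 1" unfolding b_def by (rule sum_pmf_eq_1[OF fin]) simp
  define R where "R = (\<Sum>\<omega>\<in>?\<Omega>. (a \<omega> - b \<omega>)^2 / b \<omega>)"
  have "R = (\<Sum>\<omega>\<in>?\<Omega>. (a \<omega>)^2 / b \<omega> - 2 * a \<omega> + b \<omega>)"
    unfolding R_def by (intro sum.cong refl) (auto simp: field_simps power2_eq_square dest!: bpos)
  also have "\<dots> = (\<Sum>\<omega>\<in>?\<Omega>. (a \<omega>)^2 / b \<omega>) - 2 * (\<Sum>\<omega>\<in>?\<Omega>. a \<omega>) + (\<Sum>\<omega>\<in>?\<Omega>. b \<omega>)"
    by (simp add: sum.distrib sum_subtractf sum_distrib_left)
  also have "\<dots> = (\<Sum>\<omega>\<in>?\<Omega>. (a \<omega>)^2 / b \<omega>) - 1" using sa sb by simp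
  finally have R_eq: "R = (\<Sum>\<omega>\<in>?\<Omega>. (a \<omega>)^2 / b \<omega>) - 1" .
  have "(\<Sum>\<omega>\<in>?\<Omega>. \<bar>a \<omega> - b \<omega>\<bar>) = (\<Sum>\<omega>\<in>?\<Omega>. sqrt (b \<omega>) * (\<bar>a \<omega> - b \<omega>\<bar> / sqrt (b \<omega>)))"
    by (intro sum.cong refl) (auto dest!: bpos)
  also have "\<dots> \<le> sqrt ((\<Sum>\<omega>\<in>?\<Omega>. (sqrt (b \<omega>))^2) * (\<Sum>\<omega>\<in>?\<Omega>. (\<bar>a \<omega> - b \<omega>\<bar> / sqrt (b \<omega>))^2))"
    by (rule real_le_rsqrt) (rule Cauchy_Schwarz_ineq_sum)
  also have "(\<Sum>\<omega>\<in>?\<Omega>. (sqrt (b \<omega>))^2) = 1" using sb bpos by (simp add: less_imp_le)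
  also have "(\<Sum>\<omega>\<in>?\<Omega>. (\<bar>a \<omega> - b \<omega>\<bar> / sqrt (b \<omega>))^2) = R"
    unfolding R_def by (intro sum.cong refl) (auto simp: power_divide less_imp_le dest!: bpos)
  finally show ?thesis unfolding R_eq a_def b_def by simp
qed

lemma stat_dist_le_chi_square:
  assumes fin: "finite (set_pmf B)" and sub: "set_pmf A \<subseteq> set_pmf B"
  shows "stat_dist A B \<le> 1/2 * sqrt ((\<Sum>\<omega>\<in>set_pmf B. (pmf A \<omega>)^2 / pmf B \<omega>) - 1)"
  using stat_dist_le_half_l1[OF fin sub order_refl] l1_le_sqrt_chi_square[OF fin sub] by simp

section \<open>Chi-square distance of a keyed function from uniform\<close>

lemma pmf_keyed_pair:
  fixes \<mu> :: "'m pmf" and X :: "'x pmf" and g :: "'m \<Rightarrow> 'x \<Rightarrow> 'y"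
  shows "pmf (map_pmf (\<lambda>(M, x). (M, g M x)) (pair_pmf \<mu> X)) (M, y)
         = pmf \<mu> M * pmf (map_pmf (g M) X) y"
proof -
  let ?h = "\<lambda>(M, x). (M, g M x)" and ?C = "g M -` {y}" and ?P = "pair_pmf \<mu> X"
  have "?h -` {(M, y)} = {M} \<times> ?C" by auto
  then have "pmf (map_pmf ?h ?P) (M, y) = measure_pmf.prob ?P ({M} \<times> ?C)"
    by (simp add: pmf_map)
  also have "\<dots> = measure_pmf.prob ?P ({M} \<times> (?C \<inter> set_pmf X))"
    by (subst (1 2) measure_Int_set_pmf[symmetric]) (auto intro!: arg_cong[where f="measure_pmf.prob ?P"])
  also have "\<dots> = measure_pmf.prob \<mu> {M} * measure_pmf.prob X (?C \<inter> set_pmf X)"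
    by (rule measure_pmf_prob_product) (auto intro: countable_subset[OF _ countable_set_pmf])
  also have "\<dots> = pmf \<mu> M * pmf (map_pmf (g M) X) y"
    by (simp add: measure_Int_set_pmf pmf_map measure_pmf_single)
  finally show ?thesis .
qed

lemma sum_sq_pmf_map:
  fixes X :: "'x pmf" and g :: "'x \<Rightarrow> 'y"
  assumes finY: "finite Y" and gY: "\<And>x. g x \<in> Y" and finX: "finite \<Omega>" and subX: "set_pmf X \<subseteq> \<Omega>"
  shows "(\<Sum>y\<in>Y. (pmf (map_pmf g X) y)^2)
         = (\<Sum>x\<in>\<Omega>. \<Sum>x'\<in>\<Omega>. pmf X x * pmf X x' * of_bool (g x = g x'))"
proof -
  let ?D = "pmf (map_pmf g X)"
  have "(\<Sum>y\<in>Y. (?D y)^2) = measure_pmf.expectation (map_pmf g X) ?D"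
    by (subst integral_measure_pmf_real[where A=Y]) (use finY gY in \<open>auto simp: power2_eq_square\<close>)
  also have "\<dots> = measure_pmf.expectation X (\<lambda>x. ?D (g x))" by simp
  also have "\<dots> = (\<Sum>x\<in>\<Omega>. ?D (g x) * pmf X x)"
    by (rule integral_measure_pmf_real) (use finX subX in auto)
  also have "\<dots> = (\<Sum>x\<in>\<Omega>. \<Sum>x'\<in>\<Omega>. pmf X x * pmf X x' * of_bool (g x = g x'))"
  proof (intro sum.cong refl)
    fix x
    have "?D (g x) = measure_pmf.prob X {x'. g x = g x'}" by (simp add: pmf_map vimage_def eq_commute)
    also have "\<dots> = (\<Sum>x'\<in>\<Omega>. pmf X x' * of_bool (g x = g x'))" by (rule prob_eq_sum_of_bool[OF finX subX])
    finally have "?D (g x) * pmf X x = (\<Sum>x'\<in>\<Omega>. pmf X x' * of_bool (g x = g x') * pmf X x)"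
      by (simp add: sum_distrib_right)
    then show "?D (g x) * pmf X x = (\<Sum>x'\<in>\<Omega>. pmf X x * pmf X x' * of_bool (g x = g x'))"
      by (simp add: mult_ac)
  qed
  finally show ?thesis .
qed

lemma keyed_chi_square:
  fixes \<mu> :: "'m pmf" and X :: "'x pmf" and g :: "'m \<Rightarrow> 'x \<Rightarrow> 'y"
  assumes fin\<mu>: "finite (set_pmf \<mu>)" and finY: "finite Y" and Yne: "Y \<noteq> {}"
    and finX: "finite \<Omega>" and subX: "set_pmf X \<subseteq> \<Omega>" and gY: "\<And>M x. g M x \<in> Y"
  shows "(\<Sum>\<omega>\<in>set_pmf (pair_pmf \<mu> (pmf_of_set Y)).
            (pmf (map_pmf (\<lambda>(M, x). (M, g M x)) (pair_pmf \<mu> X)) \<omega>)^2 / pmf (pair_pmf \<mu> (pmf_of_set Y)) \<omega>)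
         = real (card Y) * (\<Sum>x\<in>\<Omega>. \<Sum>x'\<in>\<Omega>. pmf X x * pmf X x' * measure_pmf.prob \<mu> {M. g M x = g M x'})"
proof -
  let ?D = "\<lambda>M. pmf (map_pmf (g M) X)"
  have cY: "real (card Y) > 0" using finY Yne by (simp add: card_gt_0_iff)
  have "(\<Sum>\<omega>\<in>set_pmf (pair_pmf \<mu> (pmf_of_set Y)).
            (pmf (map_pmf (\<lambda>(M, x). (M, g M x)) (pair_pmf \<mu> X)) \<omega>)^2 / pmf (pair_pmf \<mu> (pmf_of_set Y)) \<omega>)
        = (\<Sum>M\<in>set_pmf \<mu>. \<Sum>y\<in>Y. (pmf \<mu> M * ?D M y)^2 / (pmf \<mu> M / real (card Y)))"
  proof -
    have "set_pmf (pair_pmf \<mu> (pmf_of_set Y)) = set_pmf \<mu> \<times> Y" using finY Yne by simp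
    moreover have "pmf (pmf_of_set Y) y = 1 / real (card Y)" if "y \<in> Y" for y
      using finY Yne that by simp
    ultimately show ?thesis unfolding sum.cartesian_product
      by (intro sum.cong refl) (auto simp: pmf_keyed_pair pmf_pair)
  qed
  also have "\<dots> = (\<Sum>M\<in>set_pmf \<mu>. pmf \<mu> M * real (card Y) * (\<Sum>y\<in>Y. (?D M y)^2))"
  proof (intro sum.cong refl)
    fix M assume "M \<in> set_pmf \<mu>"
    then have "pmf \<mu> M > 0" by (simp add: pmf_positive)
    then show "(\<Sum>y\<in>Y. (pmf \<mu> M * ?D M y)^2 / (pmf \<mu> M / real (card Y)))
               = pmf \<mu> M * real (card Y) * (\<Sum>y\<in>Y. (?D M y)^2)"
      using cY by (simp add: sum_distrib_left power2_eq_square field_simps)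
  qed
  also have "\<dots> = real (card Y) * (\<Sum>x\<in>\<Omega>. \<Sum>x'\<in>\<Omega>. pmf X x * pmf X x' *
                    (\<Sum>M\<in>set_pmf \<mu>. pmf \<mu> M * of_bool (g M x = g M x')))"
    unfolding sum_sq_pmf_map[OF finY gY finX subX]
    by (simp add: sum_distrib_left sum_distrib_right algebra_simps sum.swap[of _ "set_pmf \<mu>"])
  also have "\<dots> = real (card Y) * (\<Sum>x\<in>\<Omega>. \<Sum>x'\<in>\<Omega>. pmf X x * pmf X x' * measure_pmf.prob \<mu> {M. g M x = g M x'})"
    by (simp add: prob_eq_sum_of_bool[OF fin\<mu> order_refl])
  finally show ?thesis .
qed

lemma bitvecs_eq_PiE_dflt: "bitvecs n = PiE_dflt {..<n} False (\<lambda>_. UNIV)"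
  unfolding bitvecs_def PiE_dflt_def by auto

lemma finite_bitvecs: "finite (bitvecs n)"
  unfolding bitvecs_eq_PiE_dflt by (auto intro!: finite_PiE_dflt)

lemma bitvecs_nonempty: "bitvecs n \<noteq> {}"
  unfolding bitvecs_def by auto

lemma card_bitvecs: "card (bitvecs n) = 2 ^ n"
  unfolding bitvecs_eq_PiE_dflt by (simp add: card_PiE_dflt)

lemma gf2_mult_in_bitvecs: "gf2_mult m n M x \<in> bitvecs m"
  unfolding gf2_mult_def bitvecs_def by auto

definition hamming :: "nat \<Rightarrow> (nat \<Rightarrow> bool) \<Rightarrow> (nat \<Rightarrow> bool) \<Rightarrow> nat" where
  "hamming n x y = card {j\<in>{..<n}. x j \<noteq> y j}"

lemma hamming_eq_0_imp_eq:
  assumes "x \<in> bitvecs n" "y \<in> bitvecs n" "hamming n x y = 0"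
  shows "y = x"
proof (rule ext)
  fix j
  have "{j\<in>{..<n}. x j \<noteq> y j} = {}" using assms(3) unfolding hamming_def by simp
  then show "y j = x j" using assms(1,2) unfolding bitvecs_def by (cases "j < n") auto
qed

lemma even_card_add_iff_sym_diff:
  assumes "finite A" "finite B"
  shows "even (card A + card B) \<longleftrightarrow> even (card ((A - B) \<union> (B - A)))"
proof -
  have "card A = card ((A - B) \<union> (A \<inter> B))" "card B = card ((B - A) \<union> (A \<inter> B))"
    by (metis Un_Diff_Int, metis Int_commute Un_Diff_Int)
  then have "card A = card (A - B) + card (A \<inter> B)" "card B = card (B - A) + card (A \<inter> B)"
    using assms by (simp_all add: card_Un_disjoint disjoint_iff)
  moreover have "card ((A - B) \<union> (B - A)) = card (A - B) + card (B - A)"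
    using assms by (intro card_Un_disjoint) auto
  ultimately show ?thesis by presburger
qed

lemma gf2_mult_eq_iff:
  "gf2_mult m n M x = gf2_mult m n M x' \<longleftrightarrow>
     (\<forall>i<m. even (card {j\<in>{j\<in>{..<n}. x j \<noteq> x' j}. M (i, j)}))"
proof -
  have row: "(odd (card {j\<in>{..<n}. M (i, j) \<and> x j}) \<longleftrightarrow> odd (card {j\<in>{..<n}. M (i, j) \<and> x' j}))
             \<longleftrightarrow> even (card {j\<in>{j\<in>{..<n}. x j \<noteq> x' j}. M (i, j)})" for i
  proof -
    let ?A = "{j\<in>{..<n}. M (i, j) \<and> x j}" and ?B = "{j\<in>{..<n}. M (i, j) \<and> x' j}"
    have "(?A - ?B) \<union> (?B - ?A) = {j\<in>{j\<in>{..<n}. x j \<noteq> x' j}. M (i, j)}" by auto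
    moreover have "even (card ?A + card ?B) \<longleftrightarrow> even (card ((?A - ?B) \<union> (?B - ?A)))"
      by (rule even_card_add_iff_sym_diff) auto
    ultimately show ?thesis by auto
  qed
  show ?thesis unfolding gf2_mult_def fun_eq_iff using row by auto
qed

section \<open>The random Bernoulli matrix\<close>

lemma finite_set_Pi_bernoulli: "finite D \<Longrightarrow> finite (set_pmf (Pi_pmf D False (\<lambda>_. bernoulli_pmf p)))"
  by (subst set_Pi_pmf) (auto intro!: finite_PiE_dflt)

lemma expectation_prod_Pi_bernoulli:
  fixes D :: "'a set" and f :: "'a \<Rightarrow> bool \<Rightarrow> real"
  assumes D: "finite D" and p: "0 \<le> p" "p \<le> 1"
  shows "measure_pmf.expectation (Pi_pmf D False (\<lambda>_. bernoulli_pmf p)) (\<lambda>M. \<Prod>\<omega>\<in>D. f \<omega> (M \<omega>))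
         = (\<Prod>\<omega>\<in>D. f \<omega> True * p + f \<omega> False * (1 - p))"
proof -
  let ?P = "Pi_pmf D False (\<lambda>_. bernoulli_pmf p)"
  have "prob_space.indep_vars (measure_pmf ?P) (\<lambda>_. count_space UNIV) (\<lambda>\<omega> M. M \<omega>) D"
    using indep_vars_Pi_pmf[OF D, of False "\<lambda>_. bernoulli_pmf p"] by simp
  then have indep: "prob_space.indep_vars (measure_pmf ?P) (\<lambda>_. borel) (\<lambda>\<omega> M. f \<omega> (M \<omega>)) D"
    by (rule prob_space.indep_vars_compose2[OF measure_pmf.prob_space_axioms]) auto
  have "measure_pmf.expectation ?P (\<lambda>M. \<Prod>\<omega>\<in>D. f \<omega> (M \<omega>))
        = (\<Prod>\<omega>\<in>D. measure_pmf.expectation ?P (\<lambda>M. f \<omega> (M \<omega>)))"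
    by (rule prob_space.indep_vars_lebesgue_integral[OF measure_pmf.prob_space_axioms D indep])
      (rule integrable_measure_pmf_finite[OF finite_set_Pi_bernoulli[OF D]])
  also have "\<dots> = (\<Prod>\<omega>\<in>D. f \<omega> True * p + f \<omega> False * (1 - p))"
  proof (rule prod.cong[OF refl])
    fix \<omega> assume "\<omega> \<in> D"
    have "measure_pmf.expectation ?P (\<lambda>M. f \<omega> (M \<omega>))
          = measure_pmf.expectation (map_pmf (\<lambda>M. M \<omega>) ?P) (f \<omega>)" by simp
    also have "map_pmf (\<lambda>M. M \<omega>) ?P = bernoulli_pmf p"
      using Pi_pmf_component[OF D, of \<omega> False "\<lambda>_. bernoulli_pmf p"] \<open>\<omega> \<in> D\<close> by simp
    finally show "measure_pmf.expectation ?P (\<lambda>M. f \<omega> (M \<omega>)) = f \<omega> True * p + f \<omega> False * (1 - p)"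
      using p by simp
  qed
  finally show ?thesis .
qed

lemma expectation_character:
  assumes D: "finite D" and A: "A \<subseteq> D" and p: "0 \<le> p" "p \<le> 1"
  shows "measure_pmf.expectation (Pi_pmf D False (\<lambda>_. bernoulli_pmf p))
           (\<lambda>M. \<Prod>\<omega>\<in>D. if \<omega> \<in> A \<and> M \<omega> then -1 else 1) = (1 - 2*p) ^ card A"
proof -
  have "(\<Prod>\<omega>\<in>D. (if \<omega> \<in> A \<and> True then -1 else 1) * p + (if \<omega> \<in> A \<and> False then -1 else 1) * (1 - p))
        = (\<Prod>\<omega>\<in>D. if \<omega> \<in> A then 1 - 2*p else (1::real))"
    by (intro prod.cong) auto
  also have "\<dots> = (1 - 2*p) ^ card A"
    using D A by (simp add: prod.inter_restrict[symmetric] Int_absorb2 Int_commute)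
  finally show ?thesis
    by (subst expectation_prod_Pi_bernoulli[OF D p, where f="\<lambda>\<omega> b. if \<omega> \<in> A \<and> b then -1 else 1"])
qed

lemma prod_sign_eq: "finite S \<Longrightarrow> (\<Prod>j\<in>S. if P j then -1 else (1::real)) = (-1) ^ card {j\<in>S. P j}"
  by (simp add: prod.If_cases Int_def conj_commute)

lemma prod_of_bool: "finite A \<Longrightarrow> (\<Prod>i\<in>A. of_bool (Q i) :: real) = of_bool (\<forall>i\<in>A. Q i)"
  by (induction A rule: finite_induct) auto

text \<open>Fourier expansion of the event that all rows have even weight on \<open>S\<close>:
  \<open>[\<forall>i. even] = \<Prod>\<^sub>i (1 + \<chi>\<^sub>{\<^sub>i\<^sub>}\<^sub>\<times>\<^sub>S)/2 = 2\<^sup>-\<^sup>m \<Sum>\<^sub>I \<chi>\<^sub>I\<^sub>\<times>\<^sub>S\<close>.\<close>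
lemma even_rows_expansion:
  fixes M :: "nat \<times> nat \<Rightarrow> bool"
  assumes S: "S \<subseteq> {..<n}"
  shows "of_bool (\<forall>i<m. even (card {j\<in>S. M (i, j)}))
         = (1/2)^m * (\<Sum>I\<in>Pow {..<m}. \<Prod>\<omega>\<in>{..<m} \<times> {..<n}. if \<omega> \<in> I \<times> S \<and> M \<omega> then -1 else (1::real))"
proof -
  let ?s = "\<lambda>\<omega>. if M \<omega> then -1 else (1::real)"
  have finS: "finite S" using S finite_subset by blast
  have "of_bool (\<forall>i<m. even (card {j\<in>S. M (i, j)})) = (\<Prod>i<m. of_bool (even (card {j\<in>S. M (i, j)})) :: real)"
    by (simp add: prod_of_bool lessThan_def)
  also have "\<dots> = (\<Prod>i<m. (1 + (\<Prod>j\<in>S. ?s (i, j))) / 2)"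
    by (intro prod.cong refl) (simp add: prod_sign_eq[OF finS] minus_one_power_iff)
  also have "\<dots> = (1/2)^m * (\<Prod>i<m. (\<Prod>j\<in>S. ?s (i, j)) + 1)"
    by (simp add: prod_dividef power_one_over add.commute)
  also have "(\<Prod>i<m. (\<Prod>j\<in>S. ?s (i, j)) + 1) = (\<Sum>I\<in>Pow {..<m}. (\<Prod>i\<in>I. \<Prod>j\<in>S. ?s (i, j)) * (\<Prod>i\<in>{..<m} - I. 1))"
    by (rule prod_add) simp
  also have "\<dots> = (\<Sum>I\<in>Pow {..<m}. \<Prod>\<omega>\<in>{..<m} \<times> {..<n}. if \<omega> \<in> I \<times> S \<and> M \<omega> then -1 else 1)"
  proof (intro sum.cong refl)
    fix I assume "I \<in> Pow {..<m}"
    then have "({..<m} \<times> {..<n}) \<inter> {\<omega>. \<omega> \<in> I \<times> S} = I \<times> S" using S by auto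
    moreover have "(\<Prod>\<omega>\<in>{..<m} \<times> {..<n}. if \<omega> \<in> I \<times> S \<and> M \<omega> then -1 else 1)
                   = (\<Prod>\<omega>\<in>{..<m} \<times> {..<n}. if \<omega> \<in> I \<times> S then ?s \<omega> else 1)"
      by (intro prod.cong) auto
    ultimately have "(\<Prod>\<omega>\<in>{..<m} \<times> {..<n}. if \<omega> \<in> I \<times> S \<and> M \<omega> then -1 else 1) = (\<Prod>\<omega>\<in>I \<times> S. ?s \<omega>)"
      by (simp add: prod.inter_restrict[symmetric])
    then show "(\<Prod>i\<in>I. \<Prod>j\<in>S. ?s (i, j)) * (\<Prod>i\<in>{..<m} - I. 1)
               = (\<Prod>\<omega>\<in>{..<m} \<times> {..<n}. if \<omega> \<in> I \<times> S \<and> M \<omega> then -1 else 1)"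
      by (simp add: prod.cartesian_product)
  qed
  finally show ?thesis .
qed

lemma prob_even_rows:
  assumes S: "S \<subseteq> {..<n}" and p: "0 \<le> p" "p \<le> 1"
  shows "measure_pmf.prob (rand_matrix m n p) {M. \<forall>i<m. even (card {j\<in>S. M (i, j)})}
         = ((1 + (1 - 2*p) ^ card S) / 2) ^ m"
proof -
  let ?D = "{..<m} \<times> {..<n}" and ?q = "1 - 2*p"
  let ?P = "Pi_pmf ?D False (\<lambda>_. bernoulli_pmf p)"
  have finD: "finite ?D" by simp
  have "measure_pmf.prob (rand_matrix m n p) {M. \<forall>i<m. even (card {j\<in>S. M (i, j)})}
        = measure_pmf.expectation ?P (indicator {M. \<forall>i<m. even (card {j\<in>S. M (i, j)})})"
    unfolding rand_matrix_def by simp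
  also have "\<dots> = measure_pmf.expectation ?P (\<lambda>M. of_bool (\<forall>i<m. even (card {j\<in>S. M (i, j)})))"
    by (rule arg_cong[where f="measure_pmf.expectation ?P"]) (simp add: fun_eq_iff indicator_def)
  also have "\<dots> = (1/2)^m * (\<Sum>I\<in>Pow {..<m}. measure_pmf.expectation ?P
                    (\<lambda>M. \<Prod>\<omega>\<in>?D. if \<omega> \<in> I \<times> S \<and> M \<omega> then -1 else 1))"
    unfolding even_rows_expansion[OF S]
    using finite_set_Pi_bernoulli[OF finD] by (simp add: integrable_measure_pmf_finite)
  also have "\<dots> = (1/2)^m * (\<Sum>I\<in>Pow {..<m}. \<Prod>i\<in>I. ?q ^ card S)"
  proof -
    have "measure_pmf.expectation ?P (\<lambda>M. \<Prod>\<omega>\<in>?D. if \<omega> \<in> I \<times> S \<and> M \<omega> then -1 else 1)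
          = (\<Prod>i\<in>I. ?q ^ card S)" if "I \<in> Pow {..<m}" for I
    proof -
      have "I \<times> S \<subseteq> ?D" using that S by auto
      then show ?thesis using expectation_character[OF finD _ p]
        by (simp add: card_cartesian_product power_mult[symmetric] mult.commute)
    qed
    then show ?thesis by simp
  qed
  also have "(\<Sum>I\<in>Pow {..<m}. \<Prod>i\<in>I. ?q ^ card S) = (\<Prod>i<m. ?q ^ card S + 1)"
    by (subst prod_add) simp_all
  also have "(1/2)^m * (\<Prod>i<m. ?q ^ card S + 1) = ((1 + ?q ^ card S) / 2)^m"
    by (simp add: power_divide add.commute)
  finally show ?thesis .
qed

lemma collision_prob_rand_matrix:
  assumes "0 \<le> p" "p \<le> 1"
  shows "measure_pmf.prob (rand_matrix m n p) {M. gf2_mult m n M x = gf2_mult m n M x'}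
         = ((1 + (1 - 2*p) ^ hamming n x x') / 2) ^ m"
  unfolding gf2_mult_eq_iff hamming_def by (rule prob_even_rows) (use assms in auto)

section \<open>Summing over pairs of inputs by Hamming distance\<close>

text \<open>Around a fixed \<open>x\<close>, the vectors \<open>x'\<close> correspond bijectively to their difference sets.\<close>
lemma sum_bitvecs_hamming:
  assumes x: "x \<in> bitvecs n"
  shows "(\<Sum>x'\<in>bitvecs n. \<phi> (hamming n x x')) = (\<Sum>S\<in>Pow {..<n}. \<phi> (card S))"
  unfolding hamming_def
proof (rule sum.reindex_bij_witness[of _ "\<lambda>S j. j < n \<and> (x j \<noteq> (j \<in> S))" "\<lambda>x'. {j\<in>{..<n}. x j \<noteq> x' j}"])
  fix x' assume x': "x' \<in> bitvecs n"
  show "(\<lambda>j. j < n \<and> (x j \<noteq> (j \<in> {j \<in> {..<n}. x j \<noteq> x' j}))) = x'"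
  proof (rule ext)
    fix j
    show "(j < n \<and> (x j \<noteq> (j \<in> {j \<in> {..<n}. x j \<noteq> x' j}))) = x' j"
      using x' unfolding bitvecs_def by (cases "j < n") auto
  qed
qed (auto simp: bitvecs_def)

lemma sum_Pow_card:
  fixes \<phi> :: "nat \<Rightarrow> real"
  shows "(\<Sum>S\<in>Pow {..<n}. \<phi> (card S)) = (\<Sum>d\<le>n. real (n choose d) * \<phi> d)"
proof -
  have img: "card ` Pow {..<n} = {..n}"
  proof
    show "card ` Pow {..<n} \<subseteq> {..n}" by (auto dest: card_mono[rotated] simp: subset_eq)
    show "{..n} \<subseteq> card ` Pow {..<n}"
    proof
      fix d assume "d \<in> {..n}"
      then have "{..<d} \<in> Pow {..<n}" "card {..<d} = d" by auto
      then show "d \<in> card ` Pow {..<n}" by (metis image_eqI)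
    qed
  qed
  have "(\<Sum>S\<in>Pow {..<n}. \<phi> (card S))
        = (\<Sum>d\<in>card ` Pow {..<n}. \<Sum>S\<in>{S\<in>Pow {..<n}. card S = d}. \<phi> (card S))"
    by (rule sum.image_gen) simp
  also have "\<dots> = (\<Sum>d\<le>n. real (n choose d) * \<phi> d)"
  proof (unfold img, intro sum.cong refl)
    fix d
    have "card {S\<in>Pow {..<n}. card S = d} = n choose d"
      using n_subsets[of "{..<n::nat}" d] by (simp add: Pow_def)
    moreover have "(\<Sum>S\<in>{S\<in>Pow {..<n}. card S = d}. \<phi> (card S)) = (\<Sum>S\<in>{S\<in>Pow {..<n}. card S = d}. \<phi> d)"
      by (intro sum.cong) auto
    ultimately show "(\<Sum>S\<in>{S\<in>Pow {..<n}. card S = d}. \<phi> (card S)) = real (n choose d) * \<phi> d"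
      by simp
  qed
  finally show ?thesis .
qed

lemma sum_middle_distances_le:
  fixes \<phi> :: "nat \<Rightarrow> real"
  assumes x: "x \<in> bitvecs n" and nonneg: "\<And>d. \<phi> d \<ge> 0"
  shows "(\<Sum>x'\<in>bitvecs n. of_bool (1 \<le> hamming n x x' \<and> hamming n x x' < t) * \<phi> (hamming n x x'))
         \<le> (\<Sum>d\<in>{1..<t}. real (n choose d) * \<phi> d)"
proof -
  define \<psi> where "\<psi> d = of_bool (d \<in> {1..<t}) * \<phi> d" for d
  have "(\<Sum>x'\<in>bitvecs n. of_bool (1 \<le> hamming n x x' \<and> hamming n x x' < t) * \<phi> (hamming n x x'))
        = (\<Sum>x'\<in>bitvecs n. \<psi> (hamming n x x'))" by (simp add: \<psi>_def)
  also have "\<dots> = (\<Sum>d\<le>n. real (n choose d) * \<psi> d)"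
    unfolding sum_bitvecs_hamming[OF x] by (rule sum_Pow_card)
  also have "\<dots> = (\<Sum>d\<in>{..n} \<inter> {1..<t}. real (n choose d) * \<phi> d)"
    by (auto simp: sum.inter_restrict \<psi>_def intro!: sum.cong)
  also have "\<dots> \<le> (\<Sum>d\<in>{1..<t}. real (n choose d) * \<phi> d)"
    using nonneg by (intro sum_mono2) auto
  finally show ?thesis .
qed

text \<open>Each collision term is charged to one of three classes: \<open>x' = x\<close>, distance in \<open>[1, t)\<close>
  (where \<open>P(x') \<le> c\<close> is used), and distance \<open>\<ge> t\<close> (where \<open>q^d \<le> q^t\<close>).\<close>
lemma collision_term_le:
  fixes X :: "(nat \<Rightarrow> bool) pmf" and q c :: real
  assumes bounded: "\<And>x. pmf X x \<le> c" and q: "0 \<le> q" "q \<le> 1"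
    and x: "x \<in> bitvecs n" and x': "x' \<in> bitvecs n"
  shows "pmf X x' * (1 + q ^ hamming n x x')^m
      \<le> of_bool (x' = x) * (pmf X x * 2^m)
         + of_bool (1 \<le> hamming n x x' \<and> hamming n x x' < t) * (c * (1 + q ^ hamming n x x')^m)
         + pmf X x' * (1 + q^t)^m"
proof -
  let ?h = "hamming n x x'"
  have nonneg: "0 \<le> pmf X x' * (1 + q^t)^m" using q by simp
  consider "x' = x" | "x' \<noteq> x" "?h < t" | "x' \<noteq> x" "t \<le> ?h" by linarith
  then show ?thesis
  proof cases
    case 1
    then show ?thesis using nonneg by (simp add: hamming_def)
  next
    case 2
    then have "1 \<le> ?h" using hamming_eq_0_imp_eq[OF x x'] by (metis less_one not_le)
    moreover have "pmf X x' * (1 + q ^ ?h)^m \<le> c * (1 + q ^ ?h)^m"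
      using bounded[of x'] q by (intro mult_right_mono) auto
    ultimately show ?thesis using 2 nonneg by simp
  next
    case 3
    then have "(1 + q ^ ?h)^m \<le> (1 + q^t)^m"
      using q by (intro power_mono add_left_mono power_decreasing) auto
    then show ?thesis using 3 q by (simp add: mult_left_mono)
  qed
qed

lemma collision_row_le:
  fixes X :: "(nat \<Rightarrow> bool) pmf" and q c \<delta> :: real
  assumes sub: "set_pmf X \<subseteq> bitvecs n" and bounded: "\<And>x. pmf X x \<le> c"
    and q: "0 \<le> q" "q \<le> 1"
    and far: "(1 + q^t)^m \<le> 1 + \<delta>"
    and middle: "(\<Sum>d\<in>{1..<t}. real (n choose d) * ((1 + q^d) / 2)^m) \<le> 1"
    and x: "x \<in> bitvecs n"
  shows "(\<Sum>x'\<in>bitvecs n. pmf X x' * (1 + q ^ hamming n x x')^m) \<le> pmf X x * 2^m + (1 + \<delta>) + c * 2^m"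
proof -
  let ?h = "hamming n x" and ?B = "bitvecs n"
  have c: "c \<ge> 0" using bounded[of x] pmf_nonneg[of X x] by linarith
  have "(\<Sum>x'\<in>?B. of_bool (1 \<le> ?h x' \<and> ?h x' < t) * (c * (1 + q ^ ?h x')^m))
        \<le> (\<Sum>d\<in>{1..<t}. real (n choose d) * (c * (1 + q^d)^m))"
    using c q by (intro sum_middle_distances_le[OF x]) auto
  also have "\<dots> = c * 2^m * (\<Sum>d\<in>{1..<t}. real (n choose d) * ((1 + q^d) / 2)^m)"
    by (simp add: sum_distrib_left power_divide algebra_simps)
  also have "\<dots> \<le> c * 2^m" using middle c by (simp add: mult_left_le)
  finally have mid: "(\<Sum>x'\<in>?B. of_bool (1 \<le> ?h x' \<and> ?h x' < t) * (c * (1 + q ^ ?h x')^m)) \<le> c * 2^m" .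
  have "(\<Sum>x'\<in>?B. pmf X x' * (1 + q ^ ?h x')^m)
        \<le> (\<Sum>x'\<in>?B. of_bool (x' = x) * (pmf X x * 2^m))
          + (\<Sum>x'\<in>?B. of_bool (1 \<le> ?h x' \<and> ?h x' < t) * (c * (1 + q ^ ?h x')^m))
          + (\<Sum>x'\<in>?B. pmf X x') * (1 + q^t)^m"
    using sum_mono[OF collision_term_le[OF bounded q x]] by (simp add: sum.distrib sum_distrib_right)
  also have "(\<Sum>x'\<in>?B. of_bool (x' = x) * (pmf X x * 2^m)) = pmf X x * 2^m"
  proof -
    have "?B \<inter> {x'. x' = x} = {x}" using x by auto
    then show ?thesis by (simp add: finite_bitvecs)
  qed
  also have "(\<Sum>x'\<in>?B. pmf X x') = 1" by (rule sum_pmf_eq_1[OF finite_bitvecs sub])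
  finally show ?thesis using mid far by simp
qed

lemma collision_sum_le:
  fixes X :: "(nat \<Rightarrow> bool) pmf" and q c \<delta> :: real
  assumes sub: "set_pmf X \<subseteq> bitvecs n" and bounded: "\<And>x. pmf X x \<le> c"
    and q: "0 \<le> q" "q \<le> 1"
    and far: "(1 + q^t)^m \<le> 1 + \<delta>"
    and middle: "(\<Sum>d\<in>{1..<t}. real (n choose d) * ((1 + q^d) / 2)^m) \<le> 1"
  shows "(\<Sum>x\<in>bitvecs n. \<Sum>x'\<in>bitvecs n. pmf X x * pmf X x' * (1 + q ^ hamming n x x')^m)
         \<le> 1 + \<delta> + 2 * c * 2^m"
proof -
  let ?B = "bitvecs n"
  have sP: "(\<Sum>x\<in>?B. pmf X x) = 1" by (rule sum_pmf_eq_1[OF finite_bitvecs sub])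
  have "(\<Sum>x\<in>?B. \<Sum>x'\<in>?B. pmf X x * pmf X x' * (1 + q ^ hamming n x x')^m)
        = (\<Sum>x\<in>?B. pmf X x * (\<Sum>x'\<in>?B. pmf X x' * (1 + q ^ hamming n x x')^m))"
    by (simp add: sum_distrib_left mult.assoc)
  also have "\<dots> \<le> (\<Sum>x\<in>?B. pmf X x * (pmf X x * 2^m + (1 + \<delta>) + c * 2^m))"
    by (intro sum_mono mult_left_mono collision_row_le[OF sub bounded q far middle]) auto
  also have "\<dots> = 2^m * (\<Sum>x\<in>?B. pmf X x * pmf X x) + (1 + \<delta> + c * 2^m) * (\<Sum>x\<in>?B. pmf X x)"
    by (simp add: sum.distrib sum_distrib_left sum_distrib_right algebra_simps)
  also have "(\<Sum>x\<in>?B. pmf X x * pmf X x) \<le> (\<Sum>x\<in>?B. pmf X x * c)"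
    by (intro sum_mono mult_left_mono bounded) auto
  also have "(\<Sum>x\<in>?B. pmf X x * c) = c" using sP by (simp add: sum_distrib_right[symmetric])
  finally show ?thesis using sP by simp
qed

lemma pmf_le_min_entropy:
  assumes sub: "set_pmf X \<subseteq> bitvecs n" and me: "min_entropy X \<ge> real k"
  shows "pmf X x \<le> 2 powr (- real k)"
proof (cases "x \<in> set_pmf X")
  case False then show ?thesis by (simp add: set_pmf_iff)
next
  case True
  have fin: "finite (set_pmf X)" using sub finite_bitvecs finite_subset by blast
  have P: "pmf X x > 0" using True by (simp add: pmf_positive)
  have "min_entropy X \<le> log 2 (1 / pmf X x)"
    unfolding min_entropy_def by (rule cINF_lower[OF _ True]) (use fin in \<open>auto intro: bdd_below_finite\<close>)
  then have "real k \<le> log 2 (1 / pmf X x)" using me by linarith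
  then have "2 powr real k \<le> 1 / pmf X x" using P by (simp add: le_log_iff)
  then show ?thesis using P by (simp add: powr_minus divide_simps mult.commute)
qed

lemma rand_matrix_chi_square:
  fixes X :: "(nat \<Rightarrow> bool) pmf" and m n :: nat and p :: real
  assumes p: "0 \<le> p" "p \<le> 1" and sub: "set_pmf X \<subseteq> bitvecs n"
  defines "\<mu> \<equiv> rand_matrix m n p"
  shows "(\<Sum>\<omega>\<in>set_pmf (pair_pmf \<mu> (uniform_bits m)).
            (pmf (map_pmf (\<lambda>(A, x). (A, gf2_mult m n A x)) (pair_pmf \<mu> X)) \<omega>)^2
              / pmf (pair_pmf \<mu> (uniform_bits m)) \<omega>)
         = (\<Sum>x\<in>bitvecs n. \<Sum>x'\<in>bitvecs n. pmf X x * pmf X x' * (1 + (1 - 2*p) ^ hamming n x x')^m)"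
proof -
  have fin\<mu>: "finite (set_pmf \<mu>)"
    unfolding \<mu>_def rand_matrix_def by (rule finite_set_Pi_bernoulli) simp
  have "(\<Sum>\<omega>\<in>set_pmf (pair_pmf \<mu> (uniform_bits m)).
            (pmf (map_pmf (\<lambda>(A, x). (A, gf2_mult m n A x)) (pair_pmf \<mu> X)) \<omega>)^2
              / pmf (pair_pmf \<mu> (uniform_bits m)) \<omega>)
        = real (card (bitvecs m)) * (\<Sum>x\<in>bitvecs n. \<Sum>x'\<in>bitvecs n. pmf X x * pmf X x' *
             measure_pmf.prob \<mu> {M. gf2_mult m n M x = gf2_mult m n M x'})"
    unfolding uniform_bits_def
    by (rule keyed_chi_square[OF fin\<mu> finite_bitvecs bitvecs_nonempty finite_bitvecs sub gf2_mult_in_bitvecs])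
  also have "\<dots> = (\<Sum>x\<in>bitvecs n. \<Sum>x'\<in>bitvecs n. pmf X x * pmf X x' * (1 + (1 - 2*p) ^ hamming n x x')^m)"
    unfolding \<mu>_def collision_prob_rand_matrix[OF p] card_bitvecs
    by (simp add: sum_distrib_left power_divide algebra_simps)
  finally show ?thesis .
qed

lemma rand_matrix_extractor_bound:
  fixes X :: "(nat \<Rightarrow> bool) pmf" and m n t :: nat and p c \<delta> :: real
  assumes p: "0 \<le> p" "p \<le> 1/2" and sub: "set_pmf X \<subseteq> bitvecs n"
    and bounded: "\<And>x. pmf X x \<le> c"
    and far: "(1 + (1 - 2*p)^t)^m \<le> 1 + \<delta>"
    and middle: "(\<Sum>d\<in>{1..<t}. real (n choose d) * ((1 + (1 - 2*p)^d) / 2)^m) \<le> 1"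
  defines "\<mu> \<equiv> rand_matrix m n p"
  shows "stat_dist (map_pmf (\<lambda>(A, x). (A, gf2_mult m n A x)) (pair_pmf \<mu> X)) (pair_pmf \<mu> (uniform_bits m))
         \<le> 1/2 * sqrt (\<delta> + 2 * c * 2^m)"
proof -
  let ?A = "map_pmf (\<lambda>(A, x). (A, gf2_mult m n A x)) (pair_pmf \<mu> X)" and ?B = "pair_pmf \<mu> (uniform_bits m)"
  have set_B: "set_pmf ?B = set_pmf \<mu> \<times> bitvecs m"
    unfolding uniform_bits_def using finite_bitvecs bitvecs_nonempty by simp
  have "finite (set_pmf \<mu>)" unfolding \<mu>_def rand_matrix_def by (rule finite_set_Pi_bernoulli) simp
  then have finB: "finite (set_pmf ?B)" unfolding set_B using finite_bitvecs by simp
  have subAB: "set_pmf ?A \<subseteq> set_pmf ?B" unfolding set_B using gf2_mult_in_bitvecs by auto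
  have "(\<Sum>\<omega>\<in>set_pmf ?B. (pmf ?A \<omega>)^2 / pmf ?B \<omega>)
        = (\<Sum>x\<in>bitvecs n. \<Sum>x'\<in>bitvecs n. pmf X x * pmf X x' * (1 + (1 - 2*p) ^ hamming n x x')^m)"
    unfolding \<mu>_def by (rule rand_matrix_chi_square[OF p(1) _ sub]) (use p in simp)
  also have "\<dots> \<le> 1 + \<delta> + 2 * c * 2^m"
    by (rule collision_sum_le[OF sub bounded _ _ far middle]) (use p in auto)
  finally have "(\<Sum>\<omega>\<in>set_pmf ?B. (pmf ?A \<omega>)^2 / pmf ?B \<omega>) \<le> 1 + \<delta> + 2 * c * 2^m" .
  then have "sqrt ((\<Sum>\<omega>\<in>set_pmf ?B. (pmf ?A \<omega>)^2 / pmf ?B \<omega>) - 1) \<le> sqrt (\<delta> + 2 * c * 2^m)"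
    by (intro real_sqrt_le_mono) linarith
  then show ?thesis using stat_dist_le_chi_square[OF finB subAB] by linarith
qed

lemma sparse_extractor_bound:
  fixes n k m :: nat and \<delta> :: real and X :: "(nat \<Rightarrow> bool) pmf"
  assumes m1: "1 \<le> m" and mk: "m \<le> k" and kn: "k \<le> n" and \<delta>: "0 < \<delta>" "\<delta> < 1"
    and sub: "set_pmf X \<subseteq> bitvecs n" and me: "min_entropy X \<ge> real k"
  defines "p \<equiv> min ((1 / real m) * log 2 (real m / \<delta>) * ln (exp 128 * real n / real m)) (1/2)"
  shows "stat_dist (map_pmf (\<lambda>(A, x). (A, gf2_mult m n A x)) (pair_pmf (rand_matrix m n p) X))
           (pair_pmf (rand_matrix m n p) (uniform_bits m))
         \<le> 1/2 * sqrt (\<delta> + exp 128 * 2 powr (real m - real k))"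
proof -
  have mn: "m \<le> n" using mk kn by simp
  have "real m * 1 \<le> real n * exp 128"
    using mn exp_ge_add_one_self[of 128] by (intro mult_mono) auto
  then have "1 \<le> real m / \<delta>" "1 \<le> exp 128 * real n / real m"
    using m1 \<delta> by (simp_all add: le_divide_eq mult.commute)
  then have "0 \<le> p" unfolding p_def by simp
  moreover have "p \<le> 1/2" unfolding p_def by (rule min.cobounded2)
  ultimately have p: "0 \<le> p" "p \<le> 1/2" by auto
  obtain t where "(1 + (1 - 2*p)^t)^m \<le> 1 + \<delta>"
      "(\<Sum>d\<in>{1..<t}. real (n choose d) * ((1 + (1 - 2*p)^d) / 2)^m) \<le> 1"
    using threshold_exists[OF m1 mn \<delta>] unfolding p_def[symmetric] by blast
  from rand_matrix_extractor_bound[OF p sub pmf_le_min_entropy[OF sub me] this]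
  have "stat_dist (map_pmf (\<lambda>(A, x). (A, gf2_mult m n A x)) (pair_pmf (rand_matrix m n p) X))
          (pair_pmf (rand_matrix m n p) (uniform_bits m)) \<le> 1/2 * sqrt (\<delta> + 2 * (2 powr (- real k) * 2^m))"
    by (simp only: mult.assoc)
  also have "2 powr (- real k) * 2^m = 2 powr (real m - real k)"
    by (simp add: powr_realpow[symmetric] powr_add[symmetric])
  also have "1/2 * sqrt (\<delta> + 2 * 2 powr (real m - real k)) \<le> 1/2 * sqrt (\<delta> + exp 128 * 2 powr (real m - real k))"
    using exp_ge_add_one_self[of 128] by (intro mult_left_mono real_sqrt_le_mono add_left_mono mult_right_mono) auto
  finally show ?thesis .
qed

theorem theorem1:
  "\<exists>K::real. K > 0 \<and>
     (\<forall>(n::nat) (k::nat) (m::nat) (\<delta>::real) (X :: (nat \<Rightarrow> bool) pmf).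
        1 \<le> m \<longrightarrow> m \<le> k \<longrightarrow> k \<le> n \<longrightarrow> 0 < \<delta> \<longrightarrow> \<delta> < 1 \<longrightarrow>
        set_pmf X \<subseteq> bitvecs n \<longrightarrow> min_entropy X \<ge> real k \<longrightarrow>
        (let p = min ((1 / real m) * log 2 (real m / \<delta>) * ln (K * real n / real m)) (1/2);
             Mdist = rand_matrix m n p
         in stat_dist (map_pmf (\<lambda>(A, x). (A, gf2_mult m n A x)) (pair_pmf Mdist X))
                      (pair_pmf Mdist (uniform_bits m))
            \<le> 1/2 * sqrt (\<delta> + K * 2 powr (real m - real k))))"
  unfolding Let_def
proof (intro exI[of _ "exp 128"] conjI allI impI)
  fix n k m :: nat and \<delta> :: real and X :: "(nat \<Rightarrow> bool) pmf"
  assume "1 \<le> m" "m \<le> k" "k \<le> n" "0 < \<delta>" "\<delta> < 1" "set_pmf X \<subseteq> bitvecs n" "min_entropy X \<ge> real k"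
  then show "stat_dist (map_pmf (\<lambda>(A, x). (A, gf2_mult m n A x))
                  (pair_pmf (rand_matrix m n (min (1 / real m * log 2 (real m / \<delta>) * ln (exp 128 * real n / real m)) (1/2))) X))
               (pair_pmf (rand_matrix m n (min (1 / real m * log 2 (real m / \<delta>) * ln (exp 128 * real n / real m)) (1/2)))
                 (uniform_bits m))
             \<le> 1/2 * sqrt (\<delta> + exp 128 * 2 powr (real m - real k))"
    by (rule sparse_extractor_bound)
qed simp

end
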